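(* For a finite graph $G=(V,E)$ and $z>0$, $$\sup_{\mathbf{x}\in FM(G)}\Phi^B(\mathbf{x};z)=\Phi^B(\mathbf{x}(z);z),$$ where $\mathbf{x}(z)$ is defined from the LABP limits as below.
   Context: $\vec E$: directed edges; $\partial u$: neighbours of $u$ (and, in $\sum_{e\in\partial v}$, the edges incident to $v$); empty sums are $0$. LABP: $m^0_{\vec e}(z)=0$, $m^{t+1}_{u\to v}(z)=z/(1+\sum_{w\in\partial u\setminus v}m^t_{w\to u}(z))$; $Y_{\vec e}(z)=\lim_t m^t_{\vec e}(z)$ (exists); $x_e(z)=Y_{\vec e}(z)Y_{-\vec e}(z)/(z+Y_{\vec e}(z)Y_{-\vec e}(z))$. $FM(G)=\{\mathbf{x}\in\mathbb{R}^E:x_e\ge0,\ \sum_{e\in\partial v}x_e\le1\}$. $\Phi^B(\mathbf{x};z)=(\ln z)\sum_{e\in E}x_e+S^B(\mathbf{x})$ with $S^B(\mathbf{x})=\frac12\sum_{v}\{\sum_{e\in\partial v}(-x_e\ln x_e+(1-x_e)\ln(1-x_e))-2(1-\sum_{e\in\partial v}x_e)\ln(1-\sum_{e\in\partial v}x_e)\}$, $0\ln0=0$. *)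

theory Defs
  imports Complex_Main
begin

definition simple_graph :: "'a set \<Rightarrow> 'a set set \<Rightarrow> bool" where
  "simple_graph V E \<longleftrightarrow> finite V \<and> (\<forall>e\<in>E. e \<subseteq> V \<and> card e = 2)"

definition nbrs :: "'a set set \<Rightarrow> 'a \<Rightarrow> 'a set" where
  "nbrs E u = {w. {u, w} \<in> E}"

definition inc_edges :: "'a set set \<Rightarrow> 'a \<Rightarrow> 'a set set" where
  "inc_edges E v = {e \<in> E. v \<in> e}"

text \<open>LABP messages m^t_{u->v}(z), indexed by directed edge (u,v).\<close>
primrec labp :: "'a set set \<Rightarrow> real \<Rightarrow> nat \<Rightarrow> 'a \<times> 'a \<Rightarrow> real" where
  "labp E z 0 uv = 0"
| "labp E z (Suc t) uv =
     z / (1 + (\<Sum>w \<in> nbrs E (fst uv) - {snd uv}. labp E z t (w, fst uv)))"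

definition labpY :: "'a set set \<Rightarrow> real \<Rightarrow> 'a \<times> 'a \<Rightarrow> real" where
  "labpY E z uv = lim (\<lambda>t. labp E z t uv)"

text \<open>x_e(z) for an (undirected) edge e = {u,v}; symmetric in u,v.\<close>
definition labpx :: "'a set set \<Rightarrow> real \<Rightarrow> 'a set \<Rightarrow> real" where
  "labpx E z e = (let u = (SOME u. u \<in> e); v = (SOME v. v \<in> e \<and> v \<noteq> u);
                      p = labpY E z (u, v) * labpY E z (v, u)
                  in p / (z + p))"

definition FM :: "'a set \<Rightarrow> 'a set set \<Rightarrow> ('a set \<Rightarrow> real) set" where
  "FM V E = {x. (\<forall>e\<in>E. x e \<ge> 0) \<and> (\<forall>v\<in>V. (\<Sum>e\<in>inc_edges E v. x e) \<le> 1)}"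

definition xlnx :: "real \<Rightarrow> real" where
  "xlnx t = (if t = 0 then 0 else t * ln t)"

definition SB :: "'a set \<Rightarrow> 'a set set \<Rightarrow> ('a set \<Rightarrow> real) \<Rightarrow> real" where
  "SB V E x = (1/2) * (\<Sum>v\<in>V.
      (\<Sum>e\<in>inc_edges E v. - xlnx (x e) + xlnx (1 - x e))
      - 2 * xlnx (1 - (\<Sum>e\<in>inc_edges E v. x e)))"

definition PhiB :: "'a set \<Rightarrow> 'a set set \<Rightarrow> ('a set \<Rightarrow> real) \<Rightarrow> real \<Rightarrow> real" where
  "PhiB V E x z = ln z * (\<Sum>e\<in>E. x e) + SB V E x"

end

theory Submission
  imports Defs "HOL-Analysis.Line_Segment"
begin

(* PhiB(x) is a sum over the vertices v of local terms h_v(x) that only involve the edges at v.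
   For each v we bound h_v from above by an affine "tangent" function T_v built from the LABP
   marginals labpx; the bound is an entropy inequality (a weighted Popoviciu inequality for
   t ln t, lifted by induction to a Kullback-Leibler type inequality) and is tight at x = labpx.
   Summing T_v over all vertices, the coefficient of each x_e cancels between the two endpoints
   of e because of the LABP fixed-point equations, so sum_v T_v is constant.  Hence
   PhiB(x) <= sum_v T_v(x) = sum_v T_v(labpx) = PhiB(labpx) for every x in FM(G). *)

text \<open>The convention 0 ln 0 = 0 is automatic in HOL, since 0 * ln 0 = 0.\<close>
lemma xlnx_eq: "xlnx t = t * ln t"
  by (simp add: xlnx_def)

lemma gibbs_inequality:
  fixes x m :: real
  assumes "0 \<le> x" "0 < m"
  shows "x - m \<le> x * ln x - x * ln m"
proof (cases "x = 0")
  case False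
  with assms have "0 < x" by simp
  have "ln (m / x) \<le> m / x - 1"
    using \<open>0 < x\<close> assms by (intro ln_le_minus_one) simp
  with \<open>0 < x\<close> assms have "x * (ln m - ln x) \<le> x * (m / x - 1)"
    by (simp add: ln_divide_pos mult_left_mono)
  with \<open>0 < x\<close> show ?thesis by (simp add: algebra_simps)
qed (use assms in simp)

lemma convex_xlnx: "convex_on {0..} xlnx"
proof (rule convex_onI)
  fix t x y :: real
  assume t: "0 < t" "t < 1" and xy: "x \<in> {0..}" "y \<in> {0..}"
  define m where "m = (1 - t) * x + t * y"
  show "xlnx ((1 - t) *\<^sub>R x + t *\<^sub>R y) \<le> (1 - t) * xlnx x + t * xlnx y"
  proof (cases "m = 0")
    case True
    moreover have "0 \<le> (1 - t) * x" "0 \<le> t * y" using t xy by auto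
    ultimately have "(1 - t) * x = 0" "t * y = 0" unfolding m_def by linarith+
    with t have "x = 0" "y = 0" by auto
    then show ?thesis by (simp add: xlnx_def)
  next
    case False
    with t xy have "0 < m" unfolding m_def
      by (smt (verit, best) atLeast_iff mult_nonneg_nonneg)
    have "(1 - t) * (x - m) \<le> (1 - t) * (x * ln x - x * ln m)"
      using gibbs_inequality[of x m] xy t \<open>0 < m\<close> by (intro mult_left_mono) auto
    moreover have "t * (y - m) \<le> t * (y * ln y - y * ln m)"
      using gibbs_inequality[of y m] xy t \<open>0 < m\<close> by (intro mult_left_mono) auto
    moreover have "(1 - t) * (x - m) + t * (y - m) = 0"
      unfolding m_def by (simp add: algebra_simps)
    moreover have "m * ln m = (1 - t) * (x * ln m) + t * (y * ln m)"
      unfolding m_def by (simp add: algebra_simps)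
    ultimately have "m * ln m \<le> (1 - t) * (x * ln x) + t * (y * ln y)"
      by (simp add: algebra_simps)
    then show ?thesis by (simp add: xlnx_eq m_def)
  qed
qed simp

text \<open>A convex function lies below its chord between any two points of its domain
  (stated with a nonnegative scale factor c, as it is used).\<close>
lemma convex_on_chord:
  fixes f :: "real \<Rightarrow> real"
  assumes f: "convex_on I f" and "a \<in> I" "b \<in> I" "a \<noteq> b" "x \<in> closed_segment a b" "0 \<le> c"
  shows "c * f x \<le> (c * (b - x) * f a + c * (x - a) * f b) / (b - a)"
proof -
  obtain u where u: "0 \<le> u" "u \<le> 1" "x = (1 - u) * a + u * b"
    using assms(5) by (auto simp: in_segment)
  have "f x \<le> (1 - u) * f a + u * f b"
    using convex_onD[OF f u(1,2) assms(2,3)] u(3) by simp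
  also have "\<dots> = ((b - x) * f a + (x - a) * f b) / (b - a)"
    unfolding u(3) using \<open>a \<noteq> b\<close> by (simp add: field_simps)
  finally have "c * f x \<le> c * (((b - x) * f a + (x - a) * f b) / (b - a))"
    using \<open>0 \<le> c\<close> by (rule mult_left_mono)
  then show ?thesis by (simp add: algebra_simps)
qed

lemma convex_on_pair:
  fixes f :: "real \<Rightarrow> real"
  assumes f: "convex_on I f" and "x \<in> I" "y \<in> I" "0 < v" "0 < w"
  shows "(v + w) * f ((v * x + w * y) / (v + w)) \<le> v * f x + w * f y"
proof -
  define t where "t = w / (v + w)"
  have t: "0 \<le> t" "t \<le> 1" "1 - t = v / (v + w)"
    using assms(4,5) by (auto simp: t_def field_simps)
  have "(v * x + w * y) / (v + w) = (1 - t) * x + t * y"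
    unfolding t by (simp add: t_def add_divide_distrib)
  then have "f ((v * x + w * y) / (v + w)) \<le> (1 - t) * f x + t * f y"
    using convex_onD[OF f t(1,2) assms(2,3)] by simp
  then have "(v + w) * f ((v * x + w * y) / (v + w)) \<le> (v + w) * ((1 - t) * f x + t * f y)"
    using assms(4,5) by (simp add: mult_left_mono)
  also have "\<dots> = v * f x + w * f y"
    unfolding t using assms(4,5) by (simp add: t_def distrib_left)
  finally show ?thesis .
qed

lemma convex_mean_mem:
  fixes I :: "real set"
  assumes "convex I" "x \<in> I" "y \<in> I" "0 < v" "0 < w"
  shows "(v * x + w * y) / (v + w) \<in> I"
proof -
  have "(v * x + w * y) / (v + w) = (v / (v + w)) *\<^sub>R x + (w / (v + w)) *\<^sub>R y"
    by (simp add: add_divide_distrib)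
  moreover have "v / (v + w) + w / (v + w) = 1"
    using assms(4,5) by (simp add: add_divide_distrib[symmetric])
  ultimately show ?thesis
    using assms by (metis convexD divide_pos_pos less_eq_real_def add_pos_pos)
qed

lemma mean_identities:
  fixes wa wb wc ra rb rc m :: real
  assumes "0 < wa + wc" "wa + wb + wc = 1" "m = wa * ra + wb * rb + wc * rc"
  shows "wa * (ra - m) + wb * (rb - m) = wc * (m - rc)"
    and "(wa + wc) * (m - (wa * ra + wc * rc) / (wa + wc)) = wb * (rb - m)"
    and "(wa + wc) * ((wa * ra + wc * rc) / (wa + wc) - rc) = wa * (ra - rc)"
proof -
  have mw: "m * (wa + wb + wc) = m" using assms(2) by simp
  then show "wa * (ra - m) + wb * (rb - m) = wc * (m - rc)"
    using assms(3)[symmetric] by (simp add: algebra_simps)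
  have mean: "(wa + wc) * ((wa * ra + wc * rc) / (wa + wc)) = wa * ra + wc * rc"
    using assms(1) by simp
  have "(wa + wc) * (m - (wa * ra + wc * rc) / (wa + wc)) = (wa + wc) * m - (wa * ra + wc * rc)"
    by (simp only: right_diff_distrib mean)
  also have "\<dots> = wb * (rb - m)"
    using mw assms(3)[symmetric] by (simp add: algebra_simps)
  finally show "(wa + wc) * (m - (wa * ra + wc * rc) / (wa + wc)) = wb * (rb - m)" .
  show "(wa + wc) * ((wa * ra + wc * rc) / (wa + wc) - rc) = wa * (ra - rc)"
    by (simp only: right_diff_distrib mean) (simp add: algebra_simps)
qed

lemma same_side_means_on_chord:
  fixes w1 w2 w3 r1 r2 r3 m :: real
  assumes w: "0 < w1" "0 < w2" "0 < w3" "w1 + w2 + w3 = 1"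
    and m: "m = w1 * r1 + w2 * r2 + w3 * r3"
    and side: "(m \<le> r1 \<and> m \<le> r2) \<or> (r1 \<le> m \<and> r2 \<le> m)"
  shows "(w1 * r1 + w3 * r3) / (w1 + w3) \<in> closed_segment r3 m"
    and "(w2 * r2 + w3 * r3) / (w2 + w3) \<in> closed_segment r3 m"
proof -
  define m13 where "m13 = (w1 * r1 + w3 * r3) / (w1 + w3)"
  define m23 where "m23 = (w2 * r2 + w3 * r3) / (w2 + w3)"
  note id13 = mean_identities[where wa = w1 and wb = w2 and wc = w3 and ra = r1 and rb = r2
      and rc = r3, folded m13_def]
  note id23 = mean_identities[where wa = w2 and wb = w1 and wc = w3 and ra = r2 and rb = r1
      and rc = r3, folded m23_def]
  have balance: "w1 * (r1 - m) + w2 * (r2 - m) = w3 * (m - r3)"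
    and d13: "(w1 + w3) * (m - m13) = w2 * (r2 - m)" "(w1 + w3) * (m13 - r3) = w1 * (r1 - r3)"
    and d23: "(w2 + w3) * (m - m23) = w1 * (r1 - m)" "(w2 + w3) * (m23 - r3) = w2 * (r2 - r3)"
    using id13 id23 w m by (simp_all add: ac_simps)
  have sgn: "0 \<le> c * y \<longleftrightarrow> 0 \<le> y" "c * y \<le> 0 \<longleftrightarrow> y \<le> 0" if "0 < c" for c y :: real
    using that by (auto simp: zero_le_mult_iff mult_le_0_iff)
  from side have "(r3 \<le> m13 \<and> m13 \<le> m \<and> r3 \<le> m23 \<and> m23 \<le> m)
      \<or> (m \<le> m13 \<and> m13 \<le> r3 \<and> m \<le> m23 \<and> m23 \<le> r3)"
  proof
    assume "m \<le> r1 \<and> m \<le> r2"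
    moreover from this w have "r3 \<le> m" using balance sgn(1)[of w3 "m - r3"]
      by (smt (verit) mult_nonneg_nonneg)
    ultimately show ?thesis using w d13 d23 sgn(1)[of "w1 + w3"] sgn(1)[of "w2 + w3"]
      by (smt (verit) mult_nonneg_nonneg)
  next
    assume "r1 \<le> m \<and> r2 \<le> m"
    moreover from this w have "m \<le> r3" using balance sgn(2)[of w3 "m - r3"]
      by (smt (verit) mult_nonneg_nonpos)
    ultimately show ?thesis using w d13 d23 sgn(2)[of "w1 + w3"] sgn(2)[of "w2 + w3"]
      by (smt (verit) mult_nonneg_nonpos)
  qed
  then show "m13 \<in> closed_segment r3 m" "m23 \<in> closed_segment r3 m"
    by (auto simp: closed_segment_eq_real_ivl)
qed

text \<open>Core of the weighted Popoviciu inequality, when r1 and r2 lie on the same side of the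
  mean m: the (1,2)-pair is Jensen, and the two means involving r3 lie on the chord from r3 to m,
  whose contributions add up to exactly w3 f(r3) + f(m).\<close>
lemma popoviciu_same_side:
  fixes f :: "real \<Rightarrow> real"
  assumes f: "convex_on I f" and I: "r1 \<in> I" "r2 \<in> I" "r3 \<in> I"
    and w: "0 < w1" "0 < w2" "0 < w3" "w1 + w2 + w3 = 1"
    and m: "m = w1 * r1 + w2 * r2 + w3 * r3"
    and side: "(m \<le> r1 \<and> m \<le> r2) \<or> (r1 \<le> m \<and> r2 \<le> m)"
  shows "(w1 + w2) * f ((w1 * r1 + w2 * r2) / (w1 + w2))
       + (w1 + w3) * f ((w1 * r1 + w3 * r3) / (w1 + w3))
       + (w2 + w3) * f ((w2 * r2 + w3 * r3) / (w2 + w3))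
     \<le> w1 * f r1 + w2 * f r2 + w3 * f r3 + f m"
    (is "?P12 + ?P13 + ?P23 \<le> _")
proof -
  define m13 where "m13 = (w1 * r1 + w3 * r3) / (w1 + w3)"
  define m23 where "m23 = (w2 * r2 + w3 * r3) / (w2 + w3)"
  have seg: "m13 \<in> closed_segment r3 m" "m23 \<in> closed_segment r3 m"
    using same_side_means_on_chord[OF w m side] by (simp_all add: m13_def m23_def)
  have pair12: "?P12 \<le> w1 * f r1 + w2 * f r2"
    using convex_on_pair[OF f I(1,2) w(1,2)] .
  have "(w1 + w3) * f m13 + (w2 + w3) * f m23 \<le> w3 * f r3 + f m"
  proof (cases "r3 = m")
    case True
    with seg have "m13 = m" "m23 = m" by simp_all
    then have "(w1 + w3) * f m13 + (w2 + w3) * f m23 = ((w1 + w3) + (w2 + w3)) * f m"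
      by (simp add: distrib_right)
    also have "(w1 + w3) + (w2 + w3) = w3 + 1" using w(4) by simp
    finally show ?thesis using True by (simp add: distrib_right)
  next
    case False
    note id13 = mean_identities[where wa = w1 and wb = w2 and wc = w3 and ra = r1 and rb = r2
        and rc = r3, folded m13_def]
    note id23 = mean_identities[where wa = w2 and wb = w1 and wc = w3 and ra = r2 and rb = r1
        and rc = r3, folded m23_def]
    have balance: "w1 * (r1 - m) + w2 * (r2 - m) = w3 * (m - r3)"
      and d13: "(w1 + w3) * (m - m13) = w2 * (r2 - m)" "(w1 + w3) * (m13 - r3) = w1 * (r1 - r3)"
      and d23: "(w2 + w3) * (m - m23) = w1 * (r1 - m)" "(w2 + w3) * (m23 - r3) = w2 * (r2 - r3)"
      using id13 id23 w m by (simp_all add: ac_simps)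
    have mI: "m \<in> I"
    proof -
      have "convex I" using f by (rule convex_on_imp_convex)
      have "(w1 * r1 + w2 * r2) / (w1 + w2) \<in> I"
        using convex_mean_mem[OF \<open>convex I\<close> I(1,2) w(1,2)] .
      from convex_mean_mem[OF \<open>convex I\<close> this I(3), of "w1 + w2" w3] w
      show ?thesis by (simp add: m)
    qed
    have "(w1 + w3) * f m13 + (w2 + w3) * f m23
        \<le> (w2 * (r2 - m) * f r3 + w1 * (r1 - r3) * f m) / (m - r3)
          + (w1 * (r1 - m) * f r3 + w2 * (r2 - r3) * f m) / (m - r3)"
      using convex_on_chord[OF f I(3) mI False seg(1), of "w1 + w3"]
        convex_on_chord[OF f I(3) mI False seg(2), of "w2 + w3"] w
      unfolding d13 d23 by simp
    also have "\<dots> = ((w1 * (r1 - m) + w2 * (r2 - m)) * f r3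
        + ((w1 * (r1 - m) + w2 * (r2 - m)) + (w1 + w2) * (m - r3)) * f m) / (m - r3)"
      by (simp add: add_divide_distrib[symmetric] algebra_simps)
    also have "\<dots> = w3 * f r3 + f m"
    proof -
      have "w3 * (m - r3) + (w1 + w2) * (m - r3) = (w1 + w2 + w3) * (m - r3)"
        by (simp add: algebra_simps)
      then have coeff: "w3 * (m - r3) + (w1 + w2) * (m - r3) = m - r3" using w(4) by simp
      show ?thesis unfolding balance coeff using False by (simp add: field_simps)
    qed
    finally show ?thesis .
  qed
  with pair12 show ?thesis unfolding m13_def m23_def by linarith
qed

lemma weighted_popoviciu:
  fixes f :: "real \<Rightarrow> real"
  assumes f: "convex_on I f" and I: "r1 \<in> I" "r2 \<in> I" "r3 \<in> I"
    and w: "0 < w1" "0 < w2" "0 < w3" "w1 + w2 + w3 = 1"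
  shows "(w1 + w2) * f ((w1 * r1 + w2 * r2) / (w1 + w2))
       + (w1 + w3) * f ((w1 * r1 + w3 * r3) / (w1 + w3))
       + (w2 + w3) * f ((w2 * r2 + w3 * r3) / (w2 + w3))
     \<le> w1 * f r1 + w2 * f r2 + w3 * f r3 + f (w1 * r1 + w2 * r2 + w3 * r3)"
proof -
  define m where "m = w1 * r1 + w2 * r2 + w3 * r3"
  (* two of the three points lie on the same side of the mean; move them to the front *)
  have "(m \<le> r1 \<and> m \<le> r2) \<or> (r1 \<le> m \<and> r2 \<le> m)
      \<or> (m \<le> r1 \<and> m \<le> r3) \<or> (r1 \<le> m \<and> r3 \<le> m)
      \<or> (m \<le> r2 \<and> m \<le> r3) \<or> (r2 \<le> m \<and> r3 \<le> m)"
    by linarith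
  then consider "(m \<le> r1 \<and> m \<le> r2) \<or> (r1 \<le> m \<and> r2 \<le> m)"
    | "(m \<le> r1 \<and> m \<le> r3) \<or> (r1 \<le> m \<and> r3 \<le> m)"
    | "(m \<le> r2 \<and> m \<le> r3) \<or> (r2 \<le> m \<and> r3 \<le> m)"
    by blast
  then show ?thesis
  proof cases
    case 1
    from popoviciu_same_side[OF f I w m_def this] show ?thesis by (simp add: m_def)
  next
    case 2
    from popoviciu_same_side[OF f I(1,3,2) w(1,3,2) _ _ this] w(4) show ?thesis
      by (simp add: m_def ac_simps)
  next
    case 3
    from popoviciu_same_side[OF f I(2,3,1) w(2,3,1) _ _ this] w(4) show ?thesis
      by (simp add: m_def ac_simps)
  qed
qed

definition kl_term :: "real \<Rightarrow> real \<Rightarrow> real" where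
  "kl_term p q = p * ln p - p * ln q"

lemma kl_term_perspective:
  assumes "0 \<le> p" "0 < q"
  shows "kl_term p q = q * xlnx (p / q)"
proof (cases "p = 0")
  case False
  with assms show ?thesis
    by (simp add: kl_term_def xlnx_eq ln_divide_pos algebra_simps)
qed (simp add: kl_term_def xlnx_def)

lemma kl_term_lower_bound:
  assumes "0 \<le> p" "0 \<le> q" "0 < q \<or> p = 0"
  shows "p - q \<le> kl_term p q"
  using assms gibbs_inequality[of p q] by (auto simp: kl_term_def)

text \<open>Popoviciu for the perspective: merging pairs of atoms of two distributions on three
  points loses at most the divergence itself.\<close>
lemma kl_three_point:
  fixes a b e c d f :: real
  assumes p: "0 \<le> a" "0 \<le> b" "0 \<le> e" "a + b + e = 1"
    and q: "0 < c" "0 < d" "0 \<le> f" "c + d + f = 1" and supp: "f = 0 \<longrightarrow> e = 0"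
  shows "kl_term (a + b) (c + d) + kl_term (a + e) (c + f) + kl_term (b + e) (d + f)
       \<le> kl_term a c + kl_term b d + kl_term e f"
proof (cases "f = 0")
  case True
  with p q supp show ?thesis by (simp add: kl_term_def)
next
  case False
  with q have "0 < f" by simp
  have "(c + d) * xlnx ((c * (a / c) + d * (b / d)) / (c + d))
      + (c + f) * xlnx ((c * (a / c) + f * (e / f)) / (c + f))
      + (d + f) * xlnx ((d * (b / d) + f * (e / f)) / (d + f))
      \<le> c * xlnx (a / c) + d * xlnx (b / d) + f * xlnx (e / f)
       + xlnx (c * (a / c) + d * (b / d) + f * (e / f))"
    using p q \<open>0 < f\<close>
    by (intro weighted_popoviciu[OF convex_xlnx]) auto
  moreover have "c * (a / c) = a" "d * (b / d) = b" "f * (e / f) = e"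
    using q \<open>0 < f\<close> by simp_all
  ultimately show ?thesis
    using p q \<open>0 < f\<close> by (simp add: kl_term_perspective xlnx_def)
qed

lemma kl_binary_marginals:
  fixes I :: "'b set" and p q :: "'b \<Rightarrow> real"
  assumes "finite I" "\<forall>i\<in>I. 0 \<le> p i" "\<forall>i\<in>I. 0 < q i" "sum p I \<le> 1" "sum q I < 1"
  shows "(\<Sum>i\<in>I. kl_term (p i) (q i) + kl_term (1 - p i) (1 - q i))
           + kl_term (1 - sum p I) (1 - sum q I) + kl_term (sum p I) (sum q I)
         \<le> 2 * ((\<Sum>i\<in>I. kl_term (p i) (q i)) + kl_term (1 - sum p I) (1 - sum q I))"
  using assms(1-5)
proof (induction I rule: finite_induct)
  case empty
  then show ?case by (simp add: kl_term_def)
next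
  case (insert j J)
  let ?P = "sum p J" and ?Q = "sum q J"
  have J: "\<forall>i\<in>J. 0 \<le> p i" "\<forall>i\<in>J. 0 < q i" and j: "0 \<le> p j" "0 < q j"
    using insert.prems by auto
  have PQ: "0 \<le> ?P" "0 \<le> ?Q" "?Q = 0 \<longrightarrow> ?P = 0"
    using J sum_pos[OF insert.hyps(1), of q] by (force intro: sum_nonneg less_imp_le)+
  have sums: "sum p (insert j J) = p j + ?P" "sum q (insert j J) = q j + ?Q"
    using insert.hyps by simp_all
  have IH: "(\<Sum>i\<in>J. kl_term (p i) (q i) + kl_term (1 - p i) (1 - q i))
           + kl_term (1 - ?P) (1 - ?Q) + kl_term ?P ?Q
         \<le> 2 * ((\<Sum>i\<in>J. kl_term (p i) (q i)) + kl_term (1 - ?P) (1 - ?Q))"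
    using insert.IH J insert.prems(3,4) sums j by simp
  (* merge the new atom j with the rest of J and with the complement, pairwise *)
  have "kl_term (p j + (1 - (p j + ?P))) (q j + (1 - (q j + ?Q)))
      + kl_term (p j + ?P) (q j + ?Q)
      + kl_term ((1 - (p j + ?P)) + ?P) ((1 - (q j + ?Q)) + ?Q)
      \<le> kl_term (p j) (q j) + kl_term (1 - (p j + ?P)) (1 - (q j + ?Q)) + kl_term ?P ?Q"
    using insert.prems(3,4) sums j PQ
    by (intro kl_three_point[of "p j" "1 - (p j + ?P)" ?P "q j" "1 - (q j + ?Q)" ?Q]) auto
  then have three: "kl_term (1 - ?P) (1 - ?Q) + kl_term (p j + ?P) (q j + ?Q)
        + kl_term (1 - p j) (1 - q j)
      \<le> kl_term (p j) (q j) + kl_term (1 - (p j + ?P)) (1 - (q j + ?Q)) + kl_term ?P ?Q"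
    by simp
  show ?case
    unfolding sums sum.insert[OF insert.hyps] using IH three by (smt (verit))
qed

lemma vertex_entropy_cross_bound:
  fixes I :: "'b set" and p q :: "'b \<Rightarrow> real"
  assumes "finite I" "\<forall>i\<in>I. 0 \<le> p i" "\<forall>i\<in>I. 0 < q i" "sum p I \<le> 1" "sum q I < 1"
  shows "(\<Sum>i\<in>I. - (p i * ln (p i)) + (1 - p i) * ln (1 - p i)) - 2 * ((1 - sum p I) * ln (1 - sum p I))
    \<le> (\<Sum>i\<in>I. - (p i * ln (q i)) + (1 - p i) * ln (1 - q i)) - 2 * ((1 - sum p I) * ln (1 - sum q I))"
proof -
  have PQ: "0 \<le> sum p I" "0 \<le> sum q I" "sum q I = 0 \<longrightarrow> sum p I = 0"
    using assms(2,3) sum_pos[OF assms(1), of q] by (force intro: sum_nonneg less_imp_le)+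
  have "(1 - sum p I) - (1 - sum q I) \<le> kl_term (1 - sum p I) (1 - sum q I)"
    using assms(4,5) by (intro kl_term_lower_bound) auto
  moreover have "sum p I - sum q I \<le> kl_term (sum p I) (sum q I)"
    using PQ by (intro kl_term_lower_bound) auto
  ultimately have "(\<Sum>i\<in>I. kl_term (p i) (q i) + kl_term (1 - p i) (1 - q i))
      \<le> 2 * ((\<Sum>i\<in>I. kl_term (p i) (q i)) + kl_term (1 - sum p I) (1 - sum q I))"
    using kl_binary_marginals[OF assms] by linarith
  then show ?thesis
    by (simp add: kl_term_def sum.distrib sum_subtractf algebra_simps)
qed

definition labp_step :: "'a set set \<Rightarrow> real \<Rightarrow> ('a \<times> 'a \<Rightarrow> real) \<Rightarrow> 'a \<times> 'a \<Rightarrow> real" where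
  "labp_step E z f uv = z / (1 + (\<Sum>w \<in> nbrs E (fst uv) - {snd uv}. f (w, fst uv)))"

lemma labp_Suc_step: "labp E z (Suc t) = labp_step E z (labp E z t)"
  by (rule ext) (simp add: labp_step_def)

declare labp.simps(2) [simp del]

lemma labp_step_bounds:
  assumes "0 < z" "\<And>d. 0 \<le> f d"
  shows "0 < labp_step E z f uv" "labp_step E z f uv \<le> z"
proof -
  have "0 \<le> (\<Sum>w \<in> nbrs E (fst uv) - {snd uv}. f (w, fst uv))"
    using assms(2) by (simp add: sum_nonneg)
  with assms(1) show "0 < labp_step E z f uv" "labp_step E z f uv \<le> z"
    unfolding labp_step_def by (simp_all add: divide_le_eq)
qed

lemma labp_step_antitone:
  assumes "0 \<le> z" "\<And>d. 0 \<le> f d" "f \<le> g"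
  shows "labp_step E z g \<le> labp_step E z f"
proof (rule le_funI)
  fix uv
  let ?S = "nbrs E (fst uv) - {snd uv}"
  have "0 \<le> (\<Sum>w \<in> ?S. f (w, fst uv))"
    using assms(2) by (simp add: sum_nonneg)
  moreover have "(\<Sum>w \<in> ?S. f (w, fst uv)) \<le> (\<Sum>w \<in> ?S. g (w, fst uv))"
    using assms(3) by (simp add: le_fun_def sum_mono)
  ultimately show "labp_step E z g uv \<le> labp_step E z f uv"
    unfolding labp_step_def using assms(1) by (intro divide_left_mono) auto
qed

lemma labp_step_tendsto:
  assumes "\<And>d. (\<lambda>t. F t d) \<longlonglongrightarrow> g d" "\<And>d. 0 \<le> g d"
  shows "(\<lambda>t. labp_step E z (F t) uv) \<longlonglongrightarrow> labp_step E z g uv"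
proof -
  have "0 \<le> (\<Sum>w \<in> nbrs E (fst uv) - {snd uv}. g (w, fst uv))"
    using assms(2) by (simp add: sum_nonneg)
  then show ?thesis
    unfolding labp_step_def by (intro tendsto_intros assms(1)) auto
qed

definition labp_even_limit :: "'a set set \<Rightarrow> real \<Rightarrow> 'a \<times> 'a \<Rightarrow> real" where
  "labp_even_limit E z d = (SUP t. labp E z (2 * t) d)"

definition labp_odd_limit :: "'a set set \<Rightarrow> real \<Rightarrow> 'a \<times> 'a \<Rightarrow> real" where
  "labp_odd_limit E z d = (INF t. labp E z (2 * t + 1) d)"

context
  fixes E :: "'a set set" and z :: real
  assumes z_pos: "0 < z"
begin

lemma labp_bounds: "0 \<le> labp E z t d \<and> labp E z t d \<le> z"
proof (induction t arbitrary: d)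
  case (Suc t)
  then have "\<And>d. 0 \<le> labp E z t d" by blast
  from labp_step_bounds[OF z_pos, of "labp E z t", OF this] show ?case
    unfolding labp_Suc_step by (simp add: less_imp_le)
qed (use z_pos in simp)

lemma labp_antitone: "labp E z s \<le> labp E z t \<Longrightarrow> labp E z (Suc t) \<le> labp E z (Suc s)"
  unfolding labp_Suc_step
  by (intro labp_step_antitone) (use z_pos labp_bounds in \<open>auto intro: less_imp_le\<close>)

lemma labp_bracketing: "labp E z (2 * t) \<le> labp E z (2 * t + 2) \<and> labp E z (2 * t + 2) \<le> labp E z (2 * t + 1)"
proof (induction t)
  case 0
  have "labp E z 0 \<le> labp E z 1"
    using labp_bounds by (simp add: le_fun_def)
  then have "labp E z 2 \<le> labp E z 1"
    using labp_antitone[of 0 1] by (simp add: numeral_2_eq_2)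
  moreover have "labp E z 0 \<le> labp E z 2"
    using labp_bounds by (auto simp: le_fun_def)
  ultimately show ?case by (simp del: labp.simps(1) add: numeral_2_eq_2)
next
  case (Suc t)
  have odd_step: "labp E z (2 * t + 3) \<le> labp E z (2 * t + 1)"
    using labp_antitone[of "2 * t" "2 * t + 2"] Suc.IH by (simp add: numeral_3_eq_3)
  have "labp E z (2 * t + 2) \<le> labp E z (2 * t + 3)"
    using labp_antitone[of "2 * t + 2" "2 * t + 1"] Suc.IH by (simp add: numeral_3_eq_3)
  then have "labp E z (2 * t + 4) \<le> labp E z (2 * t + 3)"
    using labp_antitone[of "2 * t + 2" "2 * t + 3"] by (simp add: numeral_3_eq_3 eval_nat_numeral)
  moreover have "labp E z (2 * t + 2) \<le> labp E z (2 * t + 4)"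
    using labp_antitone[OF odd_step] by (simp add: numeral_3_eq_3 eval_nat_numeral)
  ultimately show ?case by (simp add: eval_nat_numeral)
qed

lemma labp_even_tendsto: "(\<lambda>t. labp E z (2 * t) d) \<longlonglongrightarrow> labp_even_limit E z d"
  unfolding labp_even_limit_def
proof (rule LIMSEQ_incseq_SUP)
  show "bdd_above (range (\<lambda>t. labp E z (2 * t) d))"
    using labp_bounds by (intro bdd_aboveI[of _ z]) blast
  show "incseq (\<lambda>t. labp E z (2 * t) d)"
  proof (rule incseq_SucI)
    fix t
    have "labp E z (2 * t) \<le> labp E z (2 * Suc t)"
      using labp_bracketing[of t] by simp
    then show "labp E z (2 * t) d \<le> labp E z (2 * Suc t) d" by (rule le_funD)
  qed
qed

lemma labp_odd_tendsto: "(\<lambda>t. labp E z (2 * t + 1) d) \<longlonglongrightarrow> labp_odd_limit E z d"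
  unfolding labp_odd_limit_def
proof (rule LIMSEQ_decseq_INF)
  show "bdd_below (range (\<lambda>t. labp E z (2 * t + 1) d))"
    using labp_bounds by (intro bdd_belowI[of _ 0]) blast
  show "decseq (\<lambda>t. labp E z (2 * t + 1) d)"
  proof (rule decseq_SucI)
    fix t
    have "labp E z (2 * Suc t + 1) \<le> labp E z (2 * t + 1)"
      using labp_antitone[of "2 * t" "2 * t + 2"] labp_bracketing[of t] by simp
    then show "labp E z (2 * Suc t + 1) d \<le> labp E z (2 * t + 1) d" by (rule le_funD)
  qed
qed

text \<open>Both limits are nonnegative, so the update is continuous at them.\<close>
lemma labp_limits_nonneg: "0 \<le> labp_even_limit E z d" "0 \<le> labp_odd_limit E z d"
  by (rule LIMSEQ_le_const[OF labp_even_tendsto] LIMSEQ_le_const[OF labp_odd_tendsto],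
      use labp_bounds in blast)+

lemma labp_limits_cycle:
  "labp_odd_limit E z = labp_step E z (labp_even_limit E z)"
  "labp_even_limit E z = labp_step E z (labp_odd_limit E z)"
proof (rule_tac [!] ext)
  fix d
  have "(\<lambda>t. labp_step E z (labp E z (2 * t)) d) \<longlonglongrightarrow> labp_step E z (labp_even_limit E z) d"
    by (rule labp_step_tendsto[OF labp_even_tendsto labp_limits_nonneg(1)])
  then have "(\<lambda>t. labp E z (2 * t + 1) d) \<longlonglongrightarrow> labp_step E z (labp_even_limit E z) d"
    by (simp add: labp_Suc_step)
  with labp_odd_tendsto show "labp_odd_limit E z d = labp_step E z (labp_even_limit E z) d"
    by (rule LIMSEQ_unique)
  have "(\<lambda>t. labp_step E z (labp E z (2 * t + 1)) d) \<longlonglongrightarrow> labp_step E z (labp_odd_limit E z) d"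
    by (rule labp_step_tendsto[OF labp_odd_tendsto labp_limits_nonneg(2)])
  then have "(\<lambda>t. labp E z (2 * Suc t) d) \<longlonglongrightarrow> labp_step E z (labp_odd_limit E z) d"
    by (simp add: labp_Suc_step)
  with LIMSEQ_Suc[OF labp_even_tendsto]
  show "labp_even_limit E z d = labp_step E z (labp_odd_limit E z) d"
    by (rule LIMSEQ_unique)
qed

end

definition directed_edges :: "'a set set \<Rightarrow> ('a \<times> 'a) set" where
  "directed_edges E = {(u, v). {u, v} \<in> E}"

text \<open>A finite edge set has finitely many directed edges (even if some edges were infinite).\<close>
lemma finite_directed_edges:
  assumes "finite E"
  shows "finite (directed_edges E)"
proof (rule finite_subset)
  show "directed_edges E \<subseteq> (\<Union>e \<in> {e \<in> E. finite e}. e \<times> e)"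
    by (auto simp: directed_edges_def)
  show "finite (\<Union>e \<in> {e \<in> E. finite e}. e \<times> e)"
    using assms by auto
qed

lemma nbrs_directed_edge: "w \<in> nbrs E u \<Longrightarrow> (w, u) \<in> directed_edges E"
  by (simp add: nbrs_def directed_edges_def insert_commute)

text \<open>In a 2-cycle (a, b) of the LABP update, b is dominated by a on directed edges:
  otherwise the largest ratio b/a would be strictly increased by the update.\<close>
lemma labp_two_cycle_dominated:
  assumes "finite E" "0 < z" and a: "a = labp_step E z b" and b: "b = labp_step E z a"
    and b_nonneg: "\<And>d. 0 \<le> b d" and d: "d \<in> directed_edges E"
  shows "b d \<le> a d"
proof -
  have a_pos: "0 < a d" for d
    using labp_step_bounds(1)[OF \<open>0 < z\<close> b_nonneg] a by simp
  define r where "r = Max ((\<lambda>d. b d / a d) ` directed_edges E)"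
  have fin: "finite (directed_edges E)" using assms(1) by (rule finite_directed_edges)
  then have "r \<in> (\<lambda>d. b d / a d) ` directed_edges E"
    unfolding r_def using d by (intro Max_in) auto
  then obtain u v where uv: "(u, v) \<in> directed_edges E" "b (u, v) / a (u, v) = r" by auto
  have below: "b d' \<le> r * a d'" if "d' \<in> directed_edges E" for d'
  proof -
    have "b d' / a d' \<le> r"
      unfolding r_def using fin that by (intro Max_ge) auto
    then show ?thesis using a_pos[of d'] by (simp add: pos_divide_le_eq)
  qed
  have "r \<le> 1"
  proof (rule ccontr)
    assume "\<not> r \<le> 1"
    define S where "S = nbrs E u - {v}"
    define Sa where "Sa = (\<Sum>w\<in>S. a (w, u))"
    define Sb where "Sb = (\<Sum>w\<in>S. b (w, u))"
    have "0 \<le> Sa" unfolding Sa_def using a_pos by (simp add: sum_nonneg less_imp_le)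
    have "0 \<le> Sb" unfolding Sb_def using b_nonneg by (simp add: sum_nonneg)
    have "Sb \<le> (\<Sum>w\<in>S. r * a (w, u))"
      unfolding Sb_def S_def by (rule sum_mono) (simp add: below nbrs_directed_edge)
    then have strict: "1 + Sb < r * (1 + Sa)"
      using \<open>\<not> r \<le> 1\<close> by (simp add: Sa_def sum_distrib_left algebra_simps)
    have "b (u, v) = z / (1 + Sa)"
      by (subst b) (simp add: labp_step_def Sa_def S_def)
    moreover have "a (u, v) = z / (1 + Sb)"
      by (subst a) (simp add: labp_step_def Sb_def S_def)
    ultimately have "r = (z / (1 + Sa)) / (z / (1 + Sb))"
      using uv(2) by simp
    also have "\<dots> = (1 + Sb) / (1 + Sa)"
      using \<open>0 < z\<close> \<open>0 \<le> Sa\<close> \<open>0 \<le> Sb\<close> by simp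
    finally have "r * (1 + Sa) = 1 + Sb"
      using \<open>0 \<le> Sa\<close> by simp
    with strict show False by simp
  qed
  then have "r * a d \<le> a d"
    using a_pos[of d] by (simp add: mult_le_cancel_right1)
  then show ?thesis using below[OF d] by linarith
qed

lemma labp_two_cycle_trivial:
  assumes "finite E" "0 < z" and a: "a = labp_step E z b" and b: "b = labp_step E z a"
    and b_nonneg: "\<And>d. 0 \<le> b d"
  shows "a = b"
proof -
  have a_nonneg: "0 \<le> a d" for d
    using labp_step_bounds(1)[OF \<open>0 < z\<close>, of b, OF b_nonneg] a by (simp add: less_imp_le)
  have on_edges: "a d = b d" if "d \<in> directed_edges E" for d
    using labp_two_cycle_dominated[OF assms(1,2) a b b_nonneg that]
      labp_two_cycle_dominated[OF assms(1,2) b a a_nonneg that] by simp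
  have "a = labp_step E z b" by (fact a)
  also have "\<dots> = labp_step E z a"
  proof (rule ext)
    fix uv
    show "labp_step E z b uv = labp_step E z a uv"
      unfolding labp_step_def
      by (rule arg_cong[where f = "\<lambda>s. z / (1 + s)"], rule sum.cong)
        (simp_all add: on_edges nbrs_directed_edge)
  qed
  also have "\<dots> = b" by (rule b[symmetric])
  finally show ?thesis .
qed

lemma tendsto_even_odd:
  fixes f :: "nat \<Rightarrow> 'b::topological_space"
  assumes "(\<lambda>n. f (2 * n)) \<longlonglongrightarrow> l" and "(\<lambda>n. f (2 * n + 1)) \<longlonglongrightarrow> l"
  shows "f \<longlonglongrightarrow> l"
proof (rule topological_tendstoI)
  fix S assume "open S" "l \<in> S"
  from topological_tendstoD[OF assms(1) this] topological_tendstoD[OF assms(2) this]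
  obtain ne no where
    "\<And>n. n \<ge> ne \<Longrightarrow> f (2 * n) \<in> S" "\<And>n. n \<ge> no \<Longrightarrow> f (2 * n + 1) \<in> S"
    unfolding eventually_sequentially by blast
  then have "f n \<in> S" if "n \<ge> 2 * ne + 2 * no + 1" for n
    using that by (cases "even n") (auto elim!: evenE oddE)
  then show "eventually (\<lambda>n. f n \<in> S) sequentially"
    unfolding eventually_sequentially by blast
qed

theorem labp_convergence:
  assumes "finite E" "0 < z"
  shows "(\<lambda>t. labp E z t d) \<longlonglongrightarrow> labpY E z d"
    and "labpY E z = labp_step E z (labpY E z)"
    and "0 < labpY E z d"
proof -
  have limits_eq: "labp_even_limit E z = labp_odd_limit E z"
    using labp_two_cycle_trivial[OF assms labp_limits_cycle(2,1)[OF assms(2)]]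
      labp_limits_nonneg(2)[OF assms(2)] by blast
  have fixed: "labp_even_limit E z = labp_step E z (labp_even_limit E z)"
    by (subst (2) limits_eq) (rule labp_limits_cycle(2)[OF assms(2)])
  have conv: "(\<lambda>t. labp E z t d) \<longlonglongrightarrow> labp_even_limit E z d" for d
  proof (rule tendsto_even_odd)
    show "(\<lambda>t. labp E z (2 * t) d) \<longlonglongrightarrow> labp_even_limit E z d"
      by (rule labp_even_tendsto[OF assms(2)])
    show "(\<lambda>t. labp E z (2 * t + 1) d) \<longlonglongrightarrow> labp_even_limit E z d"
      unfolding limits_eq by (rule labp_odd_tendsto[OF assms(2)])
  qed
  then have Y: "labpY E z = labp_even_limit E z"
    by (intro ext) (simp add: labpY_def limI)
  show "(\<lambda>t. labp E z t d) \<longlonglongrightarrow> labpY E z d"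
    unfolding Y by (rule conv)
  show "labpY E z = labp_step E z (labpY E z)"
    unfolding Y by (rule fixed)
  show "0 < labpY E z d"
    unfolding Y by (subst fixed)
      (rule labp_step_bounds(1)[OF assms(2), of "labp_even_limit E z",
          OF labp_limits_nonneg(1)[OF assms(2)]])
qed

locale labp_graph =
  fixes V :: "'a set" and E :: "'a set set" and z :: real
  assumes simple: "simple_graph V E" and z_pos: "0 < z"
begin

lemma finite_V: "finite V"
  using simple by (simp add: simple_graph_def)

lemma edge_subset: "e \<in> E \<Longrightarrow> e \<subseteq> V" and edge_card: "e \<in> E \<Longrightarrow> card e = 2"
  using simple by (auto simp: simple_graph_def)

lemma finite_E: "finite E"
  using finite_V edge_subset by (meson Pow_iff finite_Pow_iff finite_subset subsetI)

lemma edge_doubleton: "e \<in> E \<Longrightarrow> \<exists>u w. e = {u, w} \<and> u \<noteq> w"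
  using edge_card card_2_iff by metis

lemma nbrs_iff: "w \<in> nbrs E v \<longleftrightarrow> {v, w} \<in> E"
  by (simp add: nbrs_def)

lemma nbrs_irrefl: "w \<in> nbrs E v \<Longrightarrow> w \<noteq> v"
  using edge_card[of "{v, w}"] by (auto simp: nbrs_def)

lemma finite_nbrs: "finite (nbrs E v)"
  using finite_V edge_subset by (auto simp: nbrs_def intro: finite_subset[of _ V])

lemma finite_inc_edges: "finite (inc_edges E v)"
  using finite_E by (simp add: inc_edges_def)

lemma inc_edges_nbrs: "inc_edges E v = (\<lambda>w. {v, w}) ` nbrs E v"
proof (intro equalityI subsetI)
  fix e assume "e \<in> inc_edges E v"
  then have e: "e \<in> E" "v \<in> e" by (auto simp: inc_edges_def)
  then obtain a b where "e = {a, b}" "a \<noteq> b" using edge_doubleton by blast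
  with e obtain w where "e = {v, w}" by auto
  with e show "e \<in> (\<lambda>w. {v, w}) ` nbrs E v" by (auto simp: nbrs_def)
qed (auto simp: nbrs_def inc_edges_def)

lemma sum_inc_edges: "(\<Sum>e\<in>inc_edges E v. f e) = (\<Sum>w\<in>nbrs E v. f {v, w})"
proof -
  have "inj_on (\<lambda>w. {v, w}) (nbrs E v)"
    using nbrs_irrefl by (auto intro!: inj_onI simp: doubleton_eq_iff)
  then show ?thesis by (simp add: inc_edges_nbrs sum.reindex)
qed

lemma double_counting: "(\<Sum>v\<in>V. \<Sum>e\<in>inc_edges E v. h v e) = (\<Sum>e\<in>E. \<Sum>v\<in>e. h v e)"
proof -
  have "(\<Sum>v\<in>V. \<Sum>e\<in>inc_edges E v. h v e) = (\<Sum>e\<in>E. \<Sum>v\<in>{v. v \<in> V \<and> v \<in> e}. h v e)"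
    unfolding inc_edges_def using sum.swap_restrict[OF finite_V finite_E] by simp
  also have "\<dots> = (\<Sum>e\<in>E. \<Sum>v\<in>e. h v e)"
  proof (rule sum.cong)
    fix e assume "e \<in> E"
    then have "{v. v \<in> V \<and> v \<in> e} = e" using edge_subset by auto
    then show "(\<Sum>v\<in>{v. v \<in> V \<and> v \<in> e}. h v e) = (\<Sum>v\<in>e. h v e)" by simp
  qed simp
  finally show ?thesis .
qed

abbreviation Y :: "'a \<times> 'a \<Rightarrow> real" where "Y \<equiv> labpY E z"

lemma Y_pos: "0 < Y d"
  using labp_convergence(3)[OF finite_E z_pos] .

lemma Y_fixed: "Y (u, v) = z / (1 + (\<Sum>w \<in> nbrs E u - {v}. Y (w, u)))"
  using fun_cong[OF labp_convergence(2)[OF finite_E z_pos], of "(u, v)"]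
  by (simp add: labp_step_def)

definition degree_mass :: "'a \<Rightarrow> real" where
  "degree_mass v = 1 + (\<Sum>w\<in>nbrs E v. Y (w, v))"

lemma degree_mass_ge_1: "1 \<le> degree_mass v"
  unfolding degree_mass_def using Y_pos by (simp add: sum_nonneg less_imp_le)

lemma Y_degree_mass:
  assumes "w \<in> nbrs E v"
  shows "Y (v, w) * degree_mass v = z + Y (v, w) * Y (w, v)"
proof -
  let ?R = "1 + (\<Sum>u\<in>nbrs E v - {w}. Y (u, v))"
  have "0 \<le> (\<Sum>u\<in>nbrs E v - {w}. Y (u, v))"
    using Y_pos by (simp add: sum_nonneg less_imp_le)
  then have "Y (v, w) * ?R = z"
    using Y_fixed[of v w] by (simp add: field_simps)
  moreover have "degree_mass v = ?R + Y (w, v)"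
    unfolding degree_mass_def using sum.remove[OF finite_nbrs assms, of "\<lambda>u. Y (u, v)"] by simp
  ultimately show ?thesis by (simp add: algebra_simps)
qed

lemma labpx_edge:
  assumes "{v, w} \<in> E"
  shows "labpx E z {v, w} = Y (v, w) * Y (w, v) / (z + Y (v, w) * Y (w, v))"
proof -
  have "v \<noteq> w" using edge_card[OF assms] by (cases "v = w") auto
  define u0 where "u0 = (SOME u. u \<in> {v, w})"
  have u0: "u0 \<in> {v, w}" unfolding u0_def by (rule someI[of _ v]) simp
  define v0 where "v0 = (SOME x. x \<in> {v, w} \<and> x \<noteq> u0)"
  have "\<exists>x. x \<in> {v, w} \<and> x \<noteq> u0" using \<open>v \<noteq> w\<close> u0 by auto
  then have v0: "v0 \<in> {v, w} \<and> v0 \<noteq> u0" unfolding v0_def by (rule someI_ex)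
  from u0 v0 have "Y (u0, v0) * Y (v0, u0) = Y (v, w) * Y (w, v)"
    by (auto simp: mult.commute)
  then show ?thesis
    unfolding labpx_def Let_def u0_def[symmetric] v0_def[symmetric] by simp
qed

lemma labpx_nbr:
  assumes "w \<in> nbrs E v"
  shows "labpx E z {v, w} = Y (w, v) / degree_mass v"
proof -
  have "0 < Y (v, w)" "0 < degree_mass v"
    using Y_pos degree_mass_ge_1[of v] by auto
  moreover have "labpx E z {v, w} = Y (v, w) * Y (w, v) / (Y (v, w) * degree_mass v)"
    using labpx_edge[of v w] assms Y_degree_mass[OF assms] by (simp add: nbrs_iff)
  ultimately show ?thesis by simp
qed

lemma labpx_bounds:
  assumes "e \<in> E"
  shows "0 < labpx E z e" "labpx E z e < 1"
proof -
  obtain u w where "e = {u, w}" using edge_doubleton[OF assms] by blast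
  moreover have "0 < Y (u, w) * Y (w, u)" using Y_pos by simp
  ultimately show "0 < labpx E z e" "labpx E z e < 1"
    using labpx_edge[of u w] assms z_pos by simp_all
qed

lemma labpx_vertex_sum: "(\<Sum>e\<in>inc_edges E v. labpx E z e) = 1 - 1 / degree_mass v"
proof -
  have "(\<Sum>e\<in>inc_edges E v. labpx E z e) = (\<Sum>w\<in>nbrs E v. Y (w, v) / degree_mass v)"
    unfolding sum_inc_edges by (rule sum.cong) (simp_all add: labpx_nbr)
  also have "\<dots> = (degree_mass v - 1) / degree_mass v"
    by (simp add: degree_mass_def sum_divide_distrib)
  also have "\<dots> = 1 - 1 / degree_mass v"
    using degree_mass_ge_1[of v] by (simp add: diff_divide_distrib)
  finally show ?thesis .
qed

lemma labpx_in_FM: "labpx E z \<in> FM V E"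
  unfolding FM_def using labpx_bounds labpx_vertex_sum degree_mass_ge_1
  by (auto intro: less_imp_le order.trans[OF zero_le_one])

definition vertex_term :: "('a set \<Rightarrow> real) \<Rightarrow> 'a \<Rightarrow> real" where
  "vertex_term x v = (1/2) * ln z * (\<Sum>e\<in>inc_edges E v. x e)
     + (1/2) * (\<Sum>e\<in>inc_edges E v. - xlnx (x e) + xlnx (1 - x e))
     - xlnx (1 - (\<Sum>e\<in>inc_edges E v. x e))"

lemma PhiB_vertex_sum: "PhiB V E x z = (\<Sum>v\<in>V. vertex_term x v)"
proof -
  have "(\<Sum>v\<in>V. \<Sum>e\<in>inc_edges E v. x e) = (\<Sum>e\<in>E. \<Sum>v\<in>e. x e)"
    by (rule double_counting)
  also have "\<dots> = 2 * (\<Sum>e\<in>E. x e)"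
    by (simp add: edge_card sum_distrib_left)
  finally have handshake: "(\<Sum>v\<in>V. \<Sum>e\<in>inc_edges E v. x e) = 2 * (\<Sum>e\<in>E. x e)" .
  have "(\<Sum>v\<in>V. vertex_term x v) = (1/2) * ln z * (\<Sum>v\<in>V. \<Sum>e\<in>inc_edges E v. x e)
      + (1/2) * (\<Sum>v\<in>V. (\<Sum>e\<in>inc_edges E v. - xlnx (x e) + xlnx (1 - x e))
                         - 2 * xlnx (1 - (\<Sum>e\<in>inc_edges E v. x e)))"
    by (simp add: vertex_term_def sum.distrib sum_subtractf sum_distrib_left algebra_simps)
  then show ?thesis
    unfolding handshake PhiB_def SB_def by simp
qed

text \<open>Tangent majorant of a vertex term at the LABP point: affine in x, and equal to the vertex
  term at x = labpx.\<close>
definition tangent_term :: "('a set \<Rightarrow> real) \<Rightarrow> 'a \<Rightarrow> real" where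
  "tangent_term x v = (1/2) * (ln z * (\<Sum>e\<in>inc_edges E v. x e)
     + (\<Sum>e\<in>inc_edges E v. - (x e * ln (labpx E z e)) + (1 - x e) * ln (1 - labpx E z e)))
     + (1 - (\<Sum>e\<in>inc_edges E v. x e)) * ln (degree_mass v)"

lemma ln_one_minus_labpx_sum: "ln (1 - (\<Sum>e\<in>inc_edges E v. labpx E z e)) = - ln (degree_mass v)"
  using degree_mass_ge_1[of v] by (simp add: labpx_vertex_sum ln_div)

lemma vertex_term_le_tangent:
  assumes "x \<in> FM V E" "v \<in> V"
  shows "vertex_term x v \<le> tangent_term x v"
proof -
  have p: "\<forall>e\<in>inc_edges E v. 0 \<le> x e" "sum x (inc_edges E v) \<le> 1"
    using assms by (auto simp: FM_def inc_edges_def)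
  have q1: "\<forall>e\<in>inc_edges E v. 0 < labpx E z e"
    using labpx_bounds by (auto simp: inc_edges_def)
  have q2: "sum (labpx E z) (inc_edges E v) < 1"
    using degree_mass_ge_1[of v] by (simp add: labpx_vertex_sum)
  show ?thesis
    using vertex_entropy_cross_bound[OF finite_inc_edges p(1) q1 p(2) q2]
    unfolding vertex_term_def tangent_term_def xlnx_eq ln_one_minus_labpx_sum
    by (simp add: algebra_simps)
qed

lemma vertex_term_labpx: "vertex_term (labpx E z) v = tangent_term (labpx E z) v"
  unfolding vertex_term_def tangent_term_def xlnx_eq ln_one_minus_labpx_sum
  by (simp add: sum.distrib sum_subtractf sum_negf sum_distrib_left algebra_simps)

definition edge_coeff :: "'a \<Rightarrow> 'a set \<Rightarrow> real" where
  "edge_coeff v e = (1/2) * (ln z - ln (labpx E z e) - ln (1 - labpx E z e)) - ln (degree_mass v)"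

definition vertex_const :: "'a \<Rightarrow> real" where
  "vertex_const v = (1/2) * (\<Sum>e\<in>inc_edges E v. ln (1 - labpx E z e)) + ln (degree_mass v)"

lemma tangent_term_affine:
  "tangent_term x v = vertex_const v + (\<Sum>e\<in>inc_edges E v. x e * edge_coeff v e)"
  unfolding tangent_term_def vertex_const_def edge_coeff_def
  by (simp add: sum.distrib sum_subtractf sum_negf sum_distrib_left sum_distrib_right algebra_simps)

text \<open>The two endpoints of an edge see opposite slopes: this is where the LABP fixed-point
  equations enter.\<close>
lemma edge_coeff_cancel:
  assumes "{u, w} \<in> E"
  shows "edge_coeff u {u, w} + edge_coeff w {u, w} = 0"
proof -
  have nbr: "w \<in> nbrs E u" "u \<in> nbrs E w"
    using assms by (simp_all add: nbrs_iff insert_commute)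
  define P where "P = Y (u, w) * Y (w, u)"
  have pos: "0 < Y (u, w)" "0 < Y (w, u)" "0 < P" "0 < z + P"
    using Y_pos z_pos by (auto simp: P_def intro: add_pos_pos)
  have x: "labpx E z {u, w} = P / (z + P)" "1 - P / (z + P) = z / (z + P)"
    using labpx_edge[OF assms] pos by (simp_all add: P_def field_simps)
  have D: "degree_mass u = (z + P) / Y (u, w)" "degree_mass w = (z + P) / Y (w, u)"
    using Y_degree_mass[OF nbr(1)] Y_degree_mass[OF nbr(2)] pos
    by (simp_all add: P_def field_simps mult.commute)
  have "edge_coeff u {u, w} + edge_coeff w {u, w}
      = ln z - ln (P / (z + P)) - ln (z / (z + P)) - ln ((z + P) / Y (u, w)) - ln ((z + P) / Y (w, u))"
    unfolding edge_coeff_def x D insert_commute[of w u] by simp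
  also have "\<dots> = ln (Y (u, w)) + ln (Y (w, u)) - ln P"
    using pos z_pos by (simp add: ln_div)
  also have "\<dots> = 0"
    using pos by (simp add: P_def ln_mult)
  finally show ?thesis .
qed

lemma tangent_sum_const: "(\<Sum>v\<in>V. tangent_term x v) = (\<Sum>v\<in>V. vertex_const v)"
proof -
  have "(\<Sum>v\<in>V. \<Sum>e\<in>inc_edges E v. x e * edge_coeff v e) = (\<Sum>e\<in>E. \<Sum>v\<in>e. x e * edge_coeff v e)"
    by (rule double_counting)
  also have "\<dots> = 0"
  proof (rule sum.neutral, rule ballI)
    fix e assume "e \<in> E"
    then obtain u w where uw: "e = {u, w}" "u \<noteq> w" using edge_doubleton by blast
    have "(\<Sum>v\<in>e. x e * edge_coeff v e) = x e * (edge_coeff u {u, w} + edge_coeff w {u, w})"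
      using uw by (simp add: algebra_simps)
    then show "(\<Sum>v\<in>e. x e * edge_coeff v e) = 0"
      using edge_coeff_cancel \<open>e \<in> E\<close> uw by simp
  qed
  finally show ?thesis
    unfolding tangent_term_affine by (simp add: sum.distrib)
qed

end

theorem proposition5:
  fixes V :: "'a set" and E :: "'a set set" and z :: real
  assumes "simple_graph V E" and "z > 0"
  shows "(SUP x \<in> FM V E. PhiB V E x z) = PhiB V E (labpx E z) z"
proof -
  interpret labp_graph V E z using assms by unfold_locales
  have "PhiB V E x z \<le> PhiB V E (labpx E z) z" if "x \<in> FM V E" for x
  proof -
    have "PhiB V E x z = (\<Sum>v\<in>V. vertex_term x v)" by (rule PhiB_vertex_sum)
    also have "\<dots> \<le> (\<Sum>v\<in>V. tangent_term x v)"
      using vertex_term_le_tangent[OF that] by (rule sum_mono)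
    also have "\<dots> = (\<Sum>v\<in>V. tangent_term (labpx E z) v)" by (simp only: tangent_sum_const)
    also have "\<dots> = PhiB V E (labpx E z) z" by (simp add: PhiB_vertex_sum vertex_term_labpx)
    finally show ?thesis .
  qed
  then show ?thesis
    using labpx_in_FM by (intro cSup_eq_maximum) auto
qed

end
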